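(* Let $X$ be a geodesic $\delta$--hyperbolic space ($\delta\geqslant0$) on which a group $G$ acts by isometries, let $U\subset G$ be finite, let $x_0\in X$ satisfy $\frac1{|U|}\sum_{u\in U}|ux_0-x_0|\leqslant E(U)+\delta$, and let $d$ be either $1$ or $\log_2(2|U|)$. Let $y_0,z_0,y_1,z_1\in S(x_0,1000d\delta)$ with $|z_0-y_1|>6d\delta$ and $|y_0-z_1|>6d\delta$. Then for all $u_0\in U_{y_0,z_0}$ and $u_1\in U_{y_1,z_1}$, $$(u_0^{-1}x_0,u_1x_0)_{x_0}\leqslant1000d\delta\quad\text{and}\quad(u_0x_0,u_1^{-1}x_0)_{x_0}\leqslant1000d\delta.$$
   Context: Distance $|x-y|$; Gromov product $(p,q)_x=\frac12(|p-x|+|q-x|-|p-q|)$; $X$ is $\delta$--hyperbolic if $(p,r)_x\geqslant\min\{(p,q)_x,(q,r)_x\}-\delta$ for all $p,q,r,x$. $E(U):=\inf_{x\in X}\frac1{|U|}\sum_{u\in U}|ux-x|$. $S(x_0,R)$ is the sphere $\{x\mid|x-x_0|=R\}$. For $y,z\in S(x_0,1000d\delta)$, $U_{y,z}:=\{u\in U\mid |ux_0-x_0|\geqslant4000d\delta,\ (x_0,ux_0)_y\leqslant d\delta,\ (x_0,u^{-1}x_0)_z\leqslant d\delta\}$. *)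

theory Defs
  imports "HOL-Analysis.Analysis" "HOL-Algebra.Group"
begin

definition gromov_product :: "'a::metric_space \<Rightarrow> 'a \<Rightarrow> 'a \<Rightarrow> real" where
  "gromov_product p q x = (dist p x + dist q x - dist p q) / 2"

definition delta_hyperbolic :: "real \<Rightarrow> 'a::metric_space itself \<Rightarrow> bool" where
  "delta_hyperbolic \<delta> _ \<longleftrightarrow>
     (\<forall>p q r x :: 'a. gromov_product p r x \<ge> min (gromov_product p q x) (gromov_product q r x) - \<delta>)"

definition geodesic_space :: "'a::metric_space itself \<Rightarrow> bool" where
  "geodesic_space _ \<longleftrightarrow>
     (\<forall>x y :: 'a. \<exists>\<gamma> :: real \<Rightarrow> 'a. \<gamma> 0 = x \<and> \<gamma> (dist x y) = y \<and>
        (\<forall>s\<in>{0..dist x y}. \<forall>t\<in>{0..dist x y}. dist (\<gamma> s) (\<gamma> t) = \<bar>s - t\<bar>))"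

definition isometric_action :: "('g, 'b) monoid_scheme \<Rightarrow> ('g \<Rightarrow> 'a::metric_space \<Rightarrow> 'a) \<Rightarrow> bool" where
  "isometric_action G act \<longleftrightarrow>
     (\<forall>x. act \<one>\<^bsub>G\<^esub> x = x) \<and>
     (\<forall>g\<in>carrier G. \<forall>h\<in>carrier G. \<forall>x. act (g \<otimes>\<^bsub>G\<^esub> h) x = act g (act h x)) \<and>
     (\<forall>g\<in>carrier G. \<forall>x y. dist (act g x) (act g y) = dist x y)"

definition mean_disp :: "('g \<Rightarrow> 'a::metric_space \<Rightarrow> 'a) \<Rightarrow> 'g set \<Rightarrow> 'a \<Rightarrow> real" where
  "mean_disp act U x = (\<Sum>u\<in>U. dist (act u x) x) / real (card U)"

definition E_energy :: "('g \<Rightarrow> 'a::metric_space \<Rightarrow> 'a) \<Rightarrow> 'g set \<Rightarrow> real" where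
  "E_energy act U = (INF x\<in>(UNIV::'a set). mean_disp act U x)"

definition U_yz :: "('g, 'b) monoid_scheme \<Rightarrow> ('g \<Rightarrow> 'a::metric_space \<Rightarrow> 'a) \<Rightarrow> 'g set
                    \<Rightarrow> 'a \<Rightarrow> real \<Rightarrow> real \<Rightarrow> 'a \<Rightarrow> 'a \<Rightarrow> 'g set" where
  "U_yz G act U x0 d \<delta> y z =
     {u\<in>U. dist (act u x0) x0 \<ge> 4000 * d * \<delta> \<and>
            gromov_product x0 (act u x0) y \<le> d * \<delta> \<and>
            gromov_product x0 (act (inv\<^bsub>G\<^esub> u) x0) z \<le> d * \<delta>}"

end

theory Submission
  imports Defs
begin

text \<open>Both Gromov products are bounded by applying the four-point condition twice. If
  \<open>(a,b)\<^sub>x\<^sub>0\<close> exceeded \<open>1000D\<close>, then, because \<open>b\<close> and \<open>a\<close> pass within \<open>D\<close> of the points \<open>y\<close> and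
  \<open>z\<close> of the sphere of radius \<open>1000D\<close>, the product \<open>(z,y)\<^sub>x\<^sub>0\<close> would be at least \<open>997D\<close>;
  but \<open>|z - y| > 6D\<close> forces it below \<open>997D\<close>. The lemma is applied to \<open>a = u\<^sub>0\<^sup>-\<^sup>1x\<^sub>0, b = u\<^sub>1x\<^sub>0\<close>
  and to \<open>a = u\<^sub>0x\<^sub>0, b = u\<^sub>1\<^sup>-\<^sup>1x\<^sub>0\<close>, with \<open>D = d\<delta> \<ge> \<delta>\<close>.\<close>

lemma gromov_product_change_basepoint:
  "gromov_product z a x = dist z x - gromov_product x a z"
  unfolding gromov_product_def by (simp add: dist_commute field_simps)

lemma gromov_product_commute:
  "gromov_product p q x = gromov_product q p x"
  unfolding gromov_product_def by (simp add: dist_commute)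

lemma gromov_product_on_sphere:
  assumes "dist z x = R" and "dist y x = R"
  shows "gromov_product z y x = R - dist z y / 2"
  using assms unfolding gromov_product_def by (simp add: field_simps)

lemma delta_hyperbolicD:
  fixes p q r x :: "'a::metric_space"
  assumes "delta_hyperbolic \<delta> TYPE('a)"
  shows "gromov_product p r x \<ge> min (gromov_product p q x) (gromov_product q r x) - \<delta>"
  using assms unfolding delta_hyperbolic_def by blast

lemma gromov_product_le_if_shadows_separated:
  fixes x0 a b y z :: "'a::metric_space"
  assumes hyp: "delta_hyperbolic \<delta> TYPE('a)" and "\<delta> \<le> D"
    and z: "dist z x0 = 1000 * D" and y: "dist y x0 = 1000 * D" and "dist z y > 6 * D"
    and a_near_z: "gromov_product x0 a z \<le> D" and b_near_y: "gromov_product x0 b y \<le> D"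
  shows "gromov_product a b x0 \<le> 1000 * D"
proof (rule ccontr)
  assume "\<not> ?thesis"
  then have ab: "gromov_product a b x0 > 1000 * D" by simp
  have "D \<ge> 0" using z zero_le_dist[of z x0] by linarith
  have "gromov_product b y x0 \<ge> 999 * D"
    using gromov_product_commute[of b y x0] gromov_product_change_basepoint[of y b x0] b_near_y y
    by linarith
  then have "gromov_product a y x0 \<ge> 998 * D"
    using delta_hyperbolicD[OF hyp, where p = a and q = b and r = y and x = x0] ab \<open>\<delta> \<le> D\<close> \<open>D \<ge> 0\<close>
    by (simp add: min_def split: if_splits)
  moreover have "gromov_product z a x0 \<ge> 999 * D"
    using gromov_product_change_basepoint[of z a x0] a_near_z z by linarith
  ultimately have "gromov_product z y x0 \<ge> 997 * D"
    using delta_hyperbolicD[OF hyp, where p = z and q = a and r = y and x = x0] \<open>\<delta> \<le> D\<close> \<open>D \<ge> 0\<close>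
    by (simp add: min_def split: if_splits)
  moreover have "gromov_product z y x0 < 997 * D"
    using gromov_product_on_sphere[OF z y] \<open>dist z y > 6 * D\<close> by linarith
  ultimately show False by linarith
qed

lemma one_le_log2_double:
  assumes "n \<ge> 1"
  shows "1 \<le> log 2 (2 * real n)"
proof -
  have "log 2 2 \<le> log 2 (2 * real n)"
    using assms by (subst log_le_cancel_iff) auto
  then show ?thesis by simp
qed

theorem lemma6p1:
  fixes G :: "('g, 'b) monoid_scheme"
    and act :: "'g \<Rightarrow> 'a::metric_space \<Rightarrow> 'a"
    and \<delta> d :: real and U :: "'g set" and x0 y0 z0 y1 z1 :: 'a and u0 u1 :: 'g
  assumes "geodesic_space TYPE('a)"
    and "\<delta> \<ge> 0" and "delta_hyperbolic \<delta> TYPE('a)"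
    and "group G" and "isometric_action G act"
    and "U \<subseteq> carrier G" and "finite U"
    and "mean_disp act U x0 \<le> E_energy act U + \<delta>"
    and "d = 1 \<or> d = log 2 (2 * real (card U))"
    and "dist y0 x0 = 1000 * d * \<delta>" and "dist z0 x0 = 1000 * d * \<delta>"
    and "dist y1 x0 = 1000 * d * \<delta>" and "dist z1 x0 = 1000 * d * \<delta>"
    and "dist z0 y1 > 6 * d * \<delta>" and "dist y0 z1 > 6 * d * \<delta>"
    and "u0 \<in> U_yz G act U x0 d \<delta> y0 z0" and "u1 \<in> U_yz G act U x0 d \<delta> y1 z1"
  shows "gromov_product (act (inv\<^bsub>G\<^esub> u0) x0) (act u1 x0) x0 \<le> 1000 * d * \<delta>
       \<and> gromov_product (act u0 x0) (act (inv\<^bsub>G\<^esub> u1) x0) x0 \<le> 1000 * d * \<delta>"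
proof -
  have "u0 \<in> U" using assms(16) unfolding U_yz_def by blast
  then have "card U \<ge> 1" using assms(7) by (metis One_nat_def Suc_leI card_gt_0_iff empty_iff)
  then have "d \<ge> 1" using assms(9) one_le_log2_double by auto
  then have D: "\<delta> \<le> d * \<delta>" using assms(2) by (metis mult_right_mono mult_1)
  have g0: "gromov_product x0 (act u0 x0) y0 \<le> d * \<delta>"
      "gromov_product x0 (act (inv\<^bsub>G\<^esub> u0) x0) z0 \<le> d * \<delta>"
    and g1: "gromov_product x0 (act u1 x0) y1 \<le> d * \<delta>"
      "gromov_product x0 (act (inv\<^bsub>G\<^esub> u1) x0) z1 \<le> d * \<delta>"
    using assms(16,17) unfolding U_yz_def by auto
  have "gromov_product (act (inv\<^bsub>G\<^esub> u0) x0) (act u1 x0) x0 \<le> 1000 * (d * \<delta>)"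
    by (rule gromov_product_le_if_shadows_separated[OF assms(3) D])
      (use assms(11,12,14) g0 g1 in \<open>simp_all add: mult.assoc\<close>)
  moreover have "gromov_product (act u0 x0) (act (inv\<^bsub>G\<^esub> u1) x0) x0 \<le> 1000 * (d * \<delta>)"
    by (rule gromov_product_le_if_shadows_separated[OF assms(3) D])
      (use assms(10,13,15) g0 g1 in \<open>simp_all add: mult.assoc\<close>)
  ultimately show ?thesis by (simp add: mult.assoc)
qed

end
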